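(* Let $D_\sigma>0$, $k_\mathrm{d}\ge0$, $r_{\mathrm{R}}>0$, $r_{\mathrm{T}}>0$, $r_0>r_{\mathrm{T}}+r_{\mathrm{R}}$ and $w_\mathrm{e}>0$. For $r>r_{\mathrm{R}}$ let $$h_\mathrm{p}(t,r)=\frac{r_{\mathrm{R}}w_\mathrm{e}}{r}\left[\frac{1}{\sqrt{\pi D_\sigma t}}\exp\Big(-\frac{(r-r_{\mathrm{R}})^2}{4D_\sigma t}-k_\mathrm{d}t\Big)-\gamma(w_\mathrm{e})\exp\big(\gamma(w_\mathrm{e})(r-r_{\mathrm{R}})+\zeta(w_\mathrm{e})t\big)\mathrm{erfc}\Big(\frac{r-r_{\mathrm{R}}}{\sqrt{4D_\sigma t}}+\gamma(w_\mathrm{e})\sqrt{D_\sigma t}\Big)\right],$$ and define $$h_\mathrm{s}(t)=\frac{1}{2r_{\mathrm{T}}}\int_{-r_{\mathrm{T}}}^{r_{\mathrm{T}}}h_\mathrm{p}\Big(t,\sqrt{r_{\mathrm{T}}^2+r_0^2-2r_0x}\Big)\,\mathrm{d}x.$$ Then $$h_\mathrm{s}(t)=\frac{r_{\mathrm{R}}w_\mathrm{e}}{2r_{\mathrm{T}}r_0}\big[\xi_1(t,r_0-r_{\mathrm{T}}-r_{\mathrm{R}})-\xi_1(t,r_0+r_{\mathrm{T}}-r_{\mathrm{R}})\big],$$ where $\xi_1(t,z)=\exp\big(\gamma(w_\mathrm{e})z+\zeta(w_\mathrm{e})t\big)\,\mathrm{erfc}\Big(\varpi(w_\mathrm{e})\sqrt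 t+\frac{z}{\sqrt{4D_\sigma t}}\Big)$.
   Context: Notation: $\gamma(w)=\frac{wr_{\mathrm{R}}+D_\sigma}{D_\sigma r_{\mathrm{R}}}$, $\zeta(w)=\gamma(w)^2D_\sigma-k_\mathrm{d}$, $\varpi(w)=\gamma(w)\sqrt{D_\sigma}$. $h_\mathrm{p}(t,r)$ is the expected hitting rate at the (homogenized) receiver of radius $r_{\mathrm{R}}$ with effective reaction rate $w_\mathrm{e}$ for a point release at distance $r$ from its center; $h_\mathrm{s}(t)$ is the hitting rate when molecules are released uniformly at time 0 from a sphere of radius $r_{\mathrm{T}}$ whose center lies at distance $r_0$ from the receiver center. *)

theory Defs
  imports "HOL-Analysis.Analysis"
begin

definition erfc :: "real \<Rightarrow> real" where
  "erfc x = 2 / sqrt pi * integral {x..} (\<lambda>s. exp (- (s\<^sup>2)))"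

definition gam :: "real \<Rightarrow> real \<Rightarrow> real \<Rightarrow> real" where
  "gam D rR w = (w * rR + D) / (D * rR)"

definition zeta :: "real \<Rightarrow> real \<Rightarrow> real \<Rightarrow> real \<Rightarrow> real" where
  "zeta D kd rR w = (gam D rR w)\<^sup>2 * D - kd"

definition varpi :: "real \<Rightarrow> real \<Rightarrow> real \<Rightarrow> real" where
  "varpi D rR w = gam D rR w * sqrt D"

definition hp :: "real \<Rightarrow> real \<Rightarrow> real \<Rightarrow> real \<Rightarrow> real \<Rightarrow> real \<Rightarrow> real" where
  "hp D kd rR we t r =
     rR * we / r *
     (1 / sqrt (pi * D * t) * exp (- ((r - rR)\<^sup>2) / (4 * D * t) - kd * t)
      - gam D rR we * exp (gam D rR we * (r - rR) + zeta D kd rR we * t)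
        * erfc ((r - rR) / sqrt (4 * D * t) + gam D rR we * sqrt (D * t)))"

definition hs :: "real \<Rightarrow> real \<Rightarrow> real \<Rightarrow> real \<Rightarrow> real \<Rightarrow> real \<Rightarrow> real \<Rightarrow> real" where
  "hs D kd rR rT r0 we t =
     1 / (2 * rT) * integral {-rT..rT} (\<lambda>x. hp D kd rR we t (sqrt (rT\<^sup>2 + r0\<^sup>2 - 2 * r0 * x)))"

definition xi1 :: "real \<Rightarrow> real \<Rightarrow> real \<Rightarrow> real \<Rightarrow> real \<Rightarrow> real \<Rightarrow> real" where
  "xi1 D kd rR we t z =
     exp (gam D rR we * z + zeta D kd rR we * t)
     * erfc (varpi D rR we * sqrt t + z / sqrt (4 * D * t))"

end

theory Submission imports Defs
begin

text \<open>
  The distance r(x) = sqrt (rT^2 + r0^2 - 2 r0 x) from the receiver centre has derivative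
  -r0 / r(x), so the Jacobian of the substitution x \<mapsto> r(x) cancels the factor 1/r of the
  point-release rate, and the spherical average becomes an ordinary integral of the bracket of hp
  over r \<in> [r0 - rT, r0 + rT]. Differentiating xi1 in z = r - rR, the derivative of erfc
  produces a Gaussian which, after completing the square in the exponent, is exactly the first
  term of that bracket; hence -xi1 is an antiderivative and the integral is a difference of xi1
  at the nearest and farthest distances.
\<close>

lemma gaussian_integrable_on_atLeast: "(\<lambda>s::real. exp (- (s\<^sup>2))) integrable_on {c..}"
proof (rule measurable_bounded_by_integrable_imp_integrable)
  show "(\<lambda>s::real. exp (- (s\<^sup>2))) \<in> borel_measurable (lebesgue_on {c..})"
    by (rule continuous_imp_measurable_on_sets_lebesgue) (auto intro!: continuous_intros)
  show "(\<lambda>s::real. exp 1 * exp (- 2 * s)) integrable_on {c..}"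
    using integrable_on_cmult_left[OF integrable_on_exp_minus_to_infinity[of 2 c], of "exp 1"]
    by simp
  show "norm (exp (- (s\<^sup>2))) \<le> exp 1 * exp (- 2 * s)" for s :: real
  proof -
    have "- (s\<^sup>2) \<le> 1 - 2 * s"
      using zero_le_power2[of "s - 1"] by (simp add: power2_eq_square algebra_simps)
    then show ?thesis by (simp add: mult_exp_exp)
  qed
qed simp

lemma erfc_has_real_derivative:
  "(erfc has_real_derivative - 2 / sqrt pi * exp (- (x\<^sup>2))) (at x)"
proof -
  let ?f = "\<lambda>s::real. exp (- (s\<^sup>2))"
  define c where "c = x - 1"
  have erfc_eq: "erfc y = 2 / sqrt pi * (integral {c..} ?f - integral {c..y} ?f)"
    if "y \<in> {c<..}" for y
  proof -
    have "{c..} = {c..y} \<union> {y..}" and "{c..y} \<inter> {y..} = {y}"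
      using that by auto
    moreover have "?f integrable_on {c..y}"
      by (intro integrable_continuous_interval continuous_intros)
    ultimately have "integral {c..} ?f = integral {c..y} ?f + integral {y..} ?f"
      using gaussian_integrable_on_atLeast[of y] by (metis integral_Un negligible_sing)
    then show ?thesis unfolding erfc_def by simp
  qed
  have "((\<lambda>y. integral {c..y} ?f) has_real_derivative ?f x) (at x within {c..x+1})"
    by (rule integral_has_real_derivative) (auto simp: c_def intro!: continuous_intros)
  moreover have "x \<in> interior {c..x+1}"
    by (simp add: c_def)
  ultimately have "((\<lambda>y. integral {c..y} ?f) has_real_derivative ?f x) (at x)"
    by (metis at_within_interior)
  then have "((\<lambda>y. 2 / sqrt pi * (integral {c..} ?f - integral {c..y} ?f))
      has_real_derivative 2 / sqrt pi * (0 - ?f x)) (at x)"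
    by (intro DERIV_cmult DERIV_diff DERIV_const)
  then have "((\<lambda>y. 2 / sqrt pi * (integral {c..} ?f - integral {c..y} ?f))
      has_real_derivative - 2 / sqrt pi * ?f x) (at x)"
    by simp
  then show ?thesis
    by (rule has_field_derivative_transform_within_open[where S = "{c<..}"])
      (auto simp: c_def erfc_eq)
qed

definition hp_kernel :: "real \<Rightarrow> real \<Rightarrow> real \<Rightarrow> real \<Rightarrow> real \<Rightarrow> real \<Rightarrow> real" where
  "hp_kernel D kd rR we t z =
     1 / sqrt (pi * D * t) * exp (- (z\<^sup>2) / (4 * D * t) - kd * t)
     - gam D rR we * exp (gam D rR we * z + zeta D kd rR we * t)
       * erfc (z / sqrt (4 * D * t) + gam D rR we * sqrt (D * t))"

lemma hp_eq_hp_kernel: "hp D kd rR we t r = rR * we / r * hp_kernel D kd rR we t (r - rR)"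
  by (simp add: hp_def hp_kernel_def)

lemma xi1_has_real_derivative:
  assumes "D > 0" and "t > 0"
  shows "(xi1 D kd rR we t has_real_derivative - hp_kernel D kd rR we t z) (at z)"
proof -
  define g where "g = gam D rR we"
  define q where "q = sqrt (D * t)"
  define e where "e = exp (g * z + zeta D kd rR we * t)"
  define u where "u = z / (2 * q) + g * q"
  have q: "q > 0" "q\<^sup>2 = D * t" "sqrt (4 * D * t) = 2 * q"
    using assms by (simp_all add: q_def real_sqrt_mult power_mult_distrib)
  have xi1_eq: "xi1 D kd rR we t =
      (\<lambda>z. exp (g * z + zeta D kd rR we * t) * erfc (z / (2 * q) + g * q))"
    by (simp add: fun_eq_iff xi1_def varpi_def g_def q(3) q_def real_sqrt_mult add.commute mult.assoc)
  have "((\<lambda>z. exp (g * z + zeta D kd rR we * t)) has_real_derivative e * g) (at z)"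
    unfolding e_def by (auto intro!: derivative_eq_intros)
  moreover have "((\<lambda>z. z / (2 * q) + g * q) has_real_derivative 1 / (2 * q)) (at z)"
    using q(1) by (auto intro!: derivative_eq_intros)
  ultimately have "(xi1 D kd rR we t has_real_derivative
      e * g * erfc u + - 2 / sqrt pi * exp (- (u\<^sup>2)) * (1 / (2 * q)) * e) (at z)"
    unfolding xi1_eq u_def e_def by (intro DERIV_mult DERIV_chain2[OF erfc_has_real_derivative])
  moreover have "e * exp (- (u\<^sup>2)) = exp (- (z\<^sup>2) / (4 * D * t) - kd * t)"
  proof -
    \<comment> \<open>completing the square, using zeta = g^2 D - kd and q^2 = D t\<close>
    have "g * z + zeta D kd rR we * t - u\<^sup>2 = - (z\<^sup>2) / (4 * D * t) - kd * t"
    proof -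
      have "t = q\<^sup>2 / D" using q(2) assms(1) by simp
      then show ?thesis
        unfolding u_def zeta_def g_def[symmetric] using q(1) assms(1)
        by (simp add: field_simps power2_eq_square)
    qed
    then show ?thesis by (simp add: e_def mult_exp_exp)
  qed
  moreover have "2 / sqrt pi * (1 / (2 * q)) = 1 / sqrt (pi * D * t)"
    using q(1) by (simp add: q_def real_sqrt_mult)
  ultimately show ?thesis
    unfolding hp_kernel_def g_def[symmetric] q_def[symmetric] q(3) u_def[symmetric] e_def[symmetric]
    by (simp add: algebra_simps)
qed

lemma sphere_distance_sq_bounds:
  fixes a r0 x :: real
  assumes "0 \<le> r0" and "x \<in> {-a..a}"
  shows "(r0 - a)\<^sup>2 \<le> a\<^sup>2 + r0\<^sup>2 - 2 * r0 * x" and "a\<^sup>2 + r0\<^sup>2 - 2 * r0 * x \<le> (r0 + a)\<^sup>2"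
proof -
  have "2 * r0 * x \<le> 2 * r0 * a" "2 * r0 * (- a) \<le> 2 * r0 * x"
    using mult_left_mono[of x a "2 * r0"] mult_left_mono[of "- a" x "2 * r0"] assms
    by auto
  then show "(r0 - a)\<^sup>2 \<le> a\<^sup>2 + r0\<^sup>2 - 2 * r0 * x" "a\<^sup>2 + r0\<^sup>2 - 2 * r0 * x \<le> (r0 + a)\<^sup>2"
    unfolding power2_diff power2_sum by linarith+
qed

lemma has_integral_of_distance_on_sphere:
  fixes G g :: "real \<Rightarrow> real"
  assumes "0 \<le> a" and "a < r0"
    and G: "\<And>r. r0 - a \<le> r \<Longrightarrow> r \<le> r0 + a \<Longrightarrow> (G has_real_derivative g r) (at r)"
  shows "((\<lambda>x. g (sqrt (a\<^sup>2 + r0\<^sup>2 - 2 * r0 * x)) / sqrt (a\<^sup>2 + r0\<^sup>2 - 2 * r0 * x))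
           has_integral (G (r0 + a) - G (r0 - a)) / r0) {-a..a}"
proof -
  define r where "r x = sqrt (a\<^sup>2 + r0\<^sup>2 - 2 * r0 * x)" for x
  have r_pos: "0 < (r0 - a)\<^sup>2" and "0 \<le> r0" using assms by simp_all
  note r_bounds = sphere_distance_sq_bounds[OF \<open>0 \<le> r0\<close>]
  have "a\<^sup>2 + r0\<^sup>2 - 2 * r0 * a = (r0 - a)\<^sup>2" "a\<^sup>2 + r0\<^sup>2 - 2 * r0 * (- a) = (r0 + a)\<^sup>2"
    by (simp_all add: power2_eq_square algebra_simps)
  then have r_ends: "r a = r0 - a" "r (- a) = r0 + a"
    using assms by (simp_all add: r_def)
  have Gr_derivative: "((G \<circ> r) has_vector_derivative g (r x) * (- r0 / r x)) (at x within {-a..a})"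
    if x: "x \<in> {-a..a}" for x
  proof -
    have "r0 - a \<le> r x" "r x \<le> r0 + a"
      using assms real_sqrt_le_mono[OF r_bounds(1)[OF x]] real_sqrt_le_mono[OF r_bounds(2)[OF x]]
      by (simp_all add: r_def)
    then have "(G has_real_derivative g (r x)) (at (r x))"
      by (rule G)
    moreover have "(r has_real_derivative - r0 / r x) (at x)"
    proof -
      have "0 < a\<^sup>2 + r0\<^sup>2 - 2 * r0 * x"
        using r_pos r_bounds(1)[OF x] by linarith
      moreover have "((\<lambda>x. a\<^sup>2 + r0\<^sup>2 - 2 * r0 * x) has_real_derivative - 2 * r0) (at x)"
        by (auto intro!: derivative_eq_intros)
      ultimately have "(r has_real_derivative inverse (r x) / 2 * (- 2 * r0)) (at x)"
        unfolding r_def[abs_def] by (rule DERIV_chain2[OF DERIV_real_sqrt])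
      then show ?thesis by (simp add: inverse_eq_divide)
    qed
    ultimately have "((G \<circ> r) has_real_derivative g (r x) * (- r0 / r x)) (at x)"
      by (rule DERIV_chain)
    then show ?thesis
      by (rule has_field_derivative_at_within[THEN has_real_derivative_iff_has_vector_derivative[THEN iffD1]])
  qed
  have "- a \<le> a" using assms by simp
  from fundamental_theorem_of_calculus[OF this Gr_derivative]
  have "((\<lambda>x. g (r x) * (- r0 / r x)) has_integral (G \<circ> r) a - (G \<circ> r) (- a)) {-a..a}" .
  then have "((\<lambda>x. - 1 / r0 * (g (r x) * (- r0 / r x))) has_integral
      - 1 / r0 * (G (r0 - a) - G (r0 + a))) {-a..a}"
    unfolding comp_def r_ends by (rule has_integral_mult_right)
  moreover have "(\<lambda>x. - 1 / r0 * (g (r x) * (- r0 / r x))) = (\<lambda>x. g (r x) / r x)"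
    using assms by (auto simp: fun_eq_iff)
  moreover have "- 1 / r0 * (G (r0 - a) - G (r0 + a)) = (G (r0 + a) - G (r0 - a)) / r0"
    by (simp add: divide_simps)
  ultimately show ?thesis
    unfolding r_def by simp
qed

theorem lemma2:
  fixes D kd rR rT r0 we t :: real
  assumes "D > 0" and "kd \<ge> 0" and "rR > 0" and "rT > 0"
    and "r0 > rT + rR" and "we > 0" and "t > 0"
  shows "hs D kd rR rT r0 we t =
           rR * we / (2 * rT * r0) *
           (xi1 D kd rR we t (r0 - rT - rR) - xi1 D kd rR we t (r0 + rT - rR))"
proof -
  let ?G = "\<lambda>r. xi1 D kd rR we t (r - rR)"
  let ?g = "\<lambda>r. - hp_kernel D kd rR we t (r - rR)"
  have "(?G has_real_derivative ?g r) (at r)" for r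
    using DERIV_chain2[OF xi1_has_real_derivative[OF assms(1,7)] DERIV_diff[OF DERIV_ident DERIV_const]]
    by simp
  then have "((\<lambda>x. ?g (sqrt (rT\<^sup>2 + r0\<^sup>2 - 2 * r0 * x)) / sqrt (rT\<^sup>2 + r0\<^sup>2 - 2 * r0 * x))
      has_integral (?G (r0 + rT) - ?G (r0 - rT)) / r0) {-rT..rT}"
    using assms by (intro has_integral_of_distance_on_sphere) auto
  from has_integral_mult_right[OF this, of "- (rR * we)"]
  have "integral {-rT..rT} (\<lambda>x. hp D kd rR we t (sqrt (rT\<^sup>2 + r0\<^sup>2 - 2 * r0 * x))) =
      - (rR * we) * ((?G (r0 + rT) - ?G (r0 - rT)) / r0)"
    by (simp add: hp_eq_hp_kernel integral_unique)
  then show ?thesis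
    using assms by (simp add: hs_def field_simps)
qed

end
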